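(* Let $A,B,C$ be C*-algebras and $\phi\colon A\to C$, $\psi\colon B\to C$ *-homomorphisms with $\phi$ surjective. Let $I\subseteq A$, $J\subseteq B$, $K\subseteq C$ be closed two-sided ideals with $\phi(I)=K$ and $\psi(J)\subseteq K$, and let $\overline\phi\colon A/I\to C/K$, $\overline\psi\colon B/J\to C/K$ be the induced maps. Then the map $$\gamma\colon (A\oplus_C B)/(I\oplus_K J)\to (A/I)\oplus_{C/K}(B/J),\qquad \gamma((a,b)+I\oplus_K J)=(a+I,\,b+J)$$ is a *-isomorphism.
   Context: For *-homomorphisms $\phi\colon A\to C$, $\psi\colon B\to C$, the pullback is $A\oplus_C B=\{(a,b)\in A\oplus B:\phi(a)=\psi(b)\}$. Here $I\oplus_K J=\{(a,b)\in A\oplus_C B: a\in I, b\in J\}$ (the pullback with respect to $\phi|_I$ and $\psi|_J$), and $(A/I)\oplus_{C/K}(B/J)$ is the pullback with respect to $\overline\phi$ and $\overline\psi$. *)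

theory Defs
  imports Complex_Main
begin

class cstar_algebra = banach + real_normed_algebra +
  fixes scaleC :: "complex \<Rightarrow> 'a \<Rightarrow> 'a"
    and adj :: "'a \<Rightarrow> 'a"
  assumes scaleC_add_right: "scaleC c (x + y) = scaleC c x + scaleC c y"
    and scaleC_add_left: "scaleC (c + d) x = scaleC c x + scaleC d x"
    and scaleC_scaleC: "scaleC c (scaleC d x) = scaleC (c * d) x"
    and scaleC_one: "scaleC 1 x = x"
    and scaleR_scaleC: "scaleR r x = scaleC (complex_of_real r) x"
    and scaleC_mult_left: "scaleC c x * y = scaleC c (x * y)"
    and scaleC_mult_right: "x * scaleC c y = scaleC c (x * y)"
    and norm_scaleC: "norm (scaleC c x) = cmod c * norm x"
    and adj_adj: "adj (adj x) = x"
    and adj_add: "adj (x + y) = adj x + adj y"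
    and adj_mult: "adj (x * y) = adj y * adj x"
    and adj_scaleC: "adj (scaleC c x) = scaleC (cnj c) (adj x)"
    and cstar_identity: "norm (adj x * x) = norm x * norm x"

text \<open>*-homomorphisms between C*-algebras (continuity is automatic).\<close>
definition cstar_hom :: "('a::cstar_algebra \<Rightarrow> 'b::cstar_algebra) \<Rightarrow> bool" where
  "cstar_hom f \<longleftrightarrow>
     (\<forall>x y. f (x + y) = f x + f y) \<and>
     (\<forall>c x. f (scaleC c x) = scaleC c (f x)) \<and>
     (\<forall>x y. f (x * y) = f x * f y) \<and>
     (\<forall>x. f (adj x) = adj (f x))"

definition closed_ideal :: "'a::cstar_algebra set \<Rightarrow> bool" where
  "closed_ideal I \<longleftrightarrow>
     closed I \<and> 0 \<in> I \<and>
     (\<forall>x\<in>I. \<forall>y\<in>I. x + y \<in> I) \<and>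
     (\<forall>c. \<forall>x\<in>I. scaleC c x \<in> I) \<and>
     (\<forall>a. \<forall>x\<in>I. a * x \<in> I \<and> x * a \<in> I)"

section \<open>*-algebras given by a carrier and operations (for quotients and pullbacks)\<close>

record 'x star_alg =
  carr :: "'x set"
  add :: "'x \<Rightarrow> 'x \<Rightarrow> 'x"
  mul :: "'x \<Rightarrow> 'x \<Rightarrow> 'x"
  smul :: "complex \<Rightarrow> 'x \<Rightarrow> 'x"
  invol :: "'x \<Rightarrow> 'x"

definition full_alg :: "'a::cstar_algebra star_alg" where
  "full_alg = \<lparr>carr = UNIV, add = (+), mul = (*), smul = scaleC, invol = adj\<rparr>"

definition pullback_alg ::
  "'x star_alg \<Rightarrow> 'y star_alg \<Rightarrow> ('x \<Rightarrow> 'z) \<Rightarrow> ('y \<Rightarrow> 'z) \<Rightarrow> ('x \<times> 'y) star_alg" where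
  "pullback_alg R S f g =
     \<lparr>carr = {(x, y). x \<in> carr R \<and> y \<in> carr S \<and> f x = g y},
      add = (\<lambda>(x, y) (x', y'). (add R x x', add S y y')),
      mul = (\<lambda>(x, y) (x', y'). (mul R x x', mul S y y')),
      smul = (\<lambda>c (x, y). (smul R c x, smul S c y)),
      invol = (\<lambda>(x, y). (invol R x, invol S y))\<rparr>"

definition coset :: "'x star_alg \<Rightarrow> 'x set \<Rightarrow> 'x \<Rightarrow> 'x set" where
  "coset R N x = {add R x n | n. n \<in> N}"

definition rep :: "'x set \<Rightarrow> 'x" where
  "rep X = (SOME x. x \<in> X)"

definition quot_alg :: "'x star_alg \<Rightarrow> 'x set \<Rightarrow> 'x set star_alg" where
  "quot_alg R N =
     \<lparr>carr = {coset R N x | x. x \<in> carr R},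
      add = (\<lambda>X Y. coset R N (add R (rep X) (rep Y))),
      mul = (\<lambda>X Y. coset R N (mul R (rep X) (rep Y))),
      smul = (\<lambda>c X. coset R N (smul R c (rep X))),
      invol = (\<lambda>X. coset R N (invol R (rep X)))\<rparr>"

definition quot_map ::
  "'x star_alg \<Rightarrow> 'x set \<Rightarrow> 'y star_alg \<Rightarrow> 'y set \<Rightarrow> ('x \<Rightarrow> 'y) \<Rightarrow> 'x set \<Rightarrow> 'y set" where
  "quot_map R N S M f X = coset S M (f (rep X))"

definition star_hom :: "'x star_alg \<Rightarrow> 'y star_alg \<Rightarrow> ('x \<Rightarrow> 'y) \<Rightarrow> bool" where
  "star_hom R S f \<longleftrightarrow>
     (\<forall>x\<in>carr R. f x \<in> carr S) \<and>
     (\<forall>x\<in>carr R. \<forall>y\<in>carr R. f (add R x y) = add S (f x) (f y)) \<and>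
     (\<forall>x\<in>carr R. \<forall>y\<in>carr R. f (mul R x y) = mul S (f x) (f y)) \<and>
     (\<forall>c. \<forall>x\<in>carr R. f (smul R c x) = smul S c (f x)) \<and>
     (\<forall>x\<in>carr R. f (invol R x) = invol S (f x))"

definition star_iso :: "'x star_alg \<Rightarrow> 'y star_alg \<Rightarrow> ('x \<Rightarrow> 'y) \<Rightarrow> bool" where
  "star_iso R S f \<longleftrightarrow> star_hom R S f \<and> bij_betw f (carr R) (carr S)"

end

theory Submission
  imports Defs "HOL-Analysis.Analysis" "HOL-Computational_Algebra.Polynomial"
begin

(* The map \<gamma> is well defined, multiplicative and injective by direct computation, and it is
   onto because a pair (a + I, b + J) with \<phi> a - \<psi> b \<in> K = \<phi> ` I lifts to (a - i, b) in the
   pullback for some i \<in> I. The analytic input is that closed ideals of a C*-algebra are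
   self-adjoint, which makes the involutions of the quotients well defined.

   For x \<in> I with norm x \<le> 1/2 put a = x x*. Banach's fixed point theorem yields p = p*
   commuting with a such that p p = 2 p - a a and x* p \<in> I; thus b = 1 - p satisfies
   a^2 + b^2 = 1 in the unitization, and right multiplication by U = a + i b is isometric.
   Now x* - x* b^m \<in> I, and writing a b^(2m) as a polynomial in U shows
   norm (x* b^m)^2 \<le> binom(2m, m) / 4^m, which tends to 0. *)

lemma scaleC_zero_left [simp]: "scaleC 0 x = 0"
  using scaleR_scaleC[of 0 x] by simp

lemma scaleC_zero_right [simp]: "scaleC c 0 = 0"
  using scaleC_add_right[of c 0 0] by simp

lemma scaleC_minus_left: "scaleC (- c) x = - scaleC c x"
  using scaleC_add_left[of c "- c" x] by (simp add: add_eq_0_iff)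

lemma scaleC_minus_right: "scaleC c (- x) = - scaleC c x"
  using scaleC_add_right[of c x "- x"] by (simp add: add_eq_0_iff)

lemma scaleC_diff_right: "scaleC c (x - y) = scaleC c x - scaleC c y"
  unfolding diff_conv_add_uminus by (simp only: scaleC_add_right scaleC_minus_right)

lemma scaleC_sum_right: "scaleC c (sum f A) = (\<Sum>i\<in>A. scaleC c (f i))"
  by (induction A rule: infinite_finite_induct) (auto simp: scaleC_add_right)

lemmas scaleC_distrib_simps = scaleC_add_right scaleC_diff_right scaleC_mult_left scaleC_mult_right
  scaleC_scaleC scaleC_one scaleC_minus_left scaleC_minus_right

lemma scaleC_half: "x + x = y \<Longrightarrow> x = scaleC (1/2) y"
proof -
  assume xy: "x + x = y"
  have "scaleC (1/2) y = scaleC (1/2) x + scaleC (1/2) x"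
    unfolding xy[symmetric] by (rule scaleC_add_right)
  also have "\<dots> = scaleC (1/2 + 1/2) x" by (simp only: scaleC_add_left)
  finally show ?thesis by (simp add: scaleC_one)
qed

lemma adj_zero [simp]: "adj 0 = 0"
  using adj_add[of 0 0] by simp

lemma adj_minus: "adj (- x) = - adj x"
  using adj_add[of x "- x"] by (simp add: add_eq_0_iff)

lemma adj_diff: "adj (x - y) = adj x - adj y"
  unfolding diff_conv_add_uminus by (simp only: adj_add adj_minus)

lemma adj_scaleR: "adj (scaleR r x) = scaleR r (adj x)"
  by (simp add: scaleR_scaleC adj_scaleC)

lemma norm_adj [simp]: "norm (adj x) = norm x"
proof -
  have le: "norm y \<le> norm (adj y)" for y :: 'a
  proof (cases "y = 0")
    case False
    have "norm y * norm y = norm (adj y * y)" by (rule cstar_identity[symmetric])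
    also have "\<dots> \<le> norm (adj y) * norm y" by (rule norm_mult_ineq)
    finally show ?thesis using False by simp
  qed simp
  show ?thesis using le[of x] le[of "adj x"] by (simp add: adj_adj)
qed

lemma norm_mult_adj: "norm (x * adj x) = norm x * norm x"
  using cstar_identity[of "adj x"] by (simp add: adj_adj)

lemma bounded_linear_adj: "bounded_linear adj"
  by (rule bounded_linear_intro[of _ 1]) (auto simp: adj_add adj_scaleR)

lemma cstar_hom_linear: "cstar_hom f \<Longrightarrow> linear f"
  by (simp add: cstar_hom_def linear_iff scaleR_scaleC)

lemma closed_ideal_subspace: "closed_ideal I \<Longrightarrow> subspace I"
  by (simp add: closed_ideal_def subspace_def scaleR_scaleC)

lemma closed_ideal_scaleC: "closed_ideal I \<Longrightarrow> x \<in> I \<Longrightarrow> scaleC c x \<in> I"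
  by (simp add: closed_ideal_def)

lemma closed_ideal_mult_left: "closed_ideal I \<Longrightarrow> x \<in> I \<Longrightarrow> y * x \<in> I"
  by (simp add: closed_ideal_def)

lemma closed_ideal_mult_right: "closed_ideal I \<Longrightarrow> x \<in> I \<Longrightarrow> x * y \<in> I"
  by (simp add: closed_ideal_def)

section \<open>Central binomial coefficients\<close>

lemma coeff_one_minus_X_power:
  "coeff ([:1, -1:] ^ M :: complex poly) k = of_nat (M choose k) * (-1) ^ k"
proof (cases "k \<le> M")
  case True
  then show ?thesis using coeff_linear_poly_power[OF True, of 1 "-1::complex"] by simp
next
  case False
  have "degree ([:1, -1:] ^ M :: complex poly) \<le> M"
    using degree_power_le[of "[:1, -1::complex:]" M] by simp
  then show ?thesis using False by (simp add: coeff_eq_0 binomial_eq_0)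
qed

lemma sum_abs_diff_binomial:
  "(\<Sum>j\<le>2*m. \<bar>real ((2*m) choose j) - real ((2*m) choose Suc j)\<bar>) = 2 * real ((2*m) choose m) - 1"
proof -
  define b where "b j = real ((2*m) choose j)" for j
  have up: "\<bar>b j - b (Suc j)\<bar> = b (Suc j) - b j" if "j < m" for j
  proof -
    have "(2*m) choose j \<le> (2*m) choose (Suc j)" using that by (intro binomial_mono) auto
    then show ?thesis unfolding b_def by simp
  qed
  have down: "\<bar>b j - b (Suc j)\<bar> = b j - b (Suc j)" if "m \<le> j" for j
  proof (cases "Suc j \<le> 2*m")
    case True
    have "(2*m) choose (Suc j) \<le> (2*m) choose j" using that True by (intro binomial_antimono) auto
    then show ?thesis unfolding b_def by simp
  qed (simp add: b_def binomial_eq_0)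
  have "{..2*m} = {..<m} \<union> {m..2*m}" by auto
  then have "(\<Sum>j\<le>2*m. \<bar>b j - b (Suc j)\<bar>)
      = (\<Sum>j<m. \<bar>b j - b (Suc j)\<bar>) + (\<Sum>j=m..2*m. \<bar>b j - b (Suc j)\<bar>)"
    by (simp only:) (rule sum.union_disjoint, auto)
  also have "(\<Sum>j<m. \<bar>b j - b (Suc j)\<bar>) = (\<Sum>j<m. b (Suc j) - b j)" by (simp add: up)
  also have "\<dots> = b m - b 0" by (rule sum_lessThan_telescope)
  also have "(\<Sum>j=m..2*m. \<bar>b j - b (Suc j)\<bar>) = - (\<Sum>j=m..2*m. b (Suc j) - b j)"
    by (simp add: down sum_negf[symmetric])
  also have "(\<Sum>j=m..2*m. b (Suc j) - b j) = b (Suc (2*m)) - b m" by (rule sum_Suc_diff) simp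
  finally show ?thesis by (simp add: b_def binomial_eq_0)
qed

lemma sum_norm_coeff_one_plus_X_one_minus_X_power:
  fixes m :: nat
  defines "P \<equiv> [:1, 1:] * [:1, -1:] ^ (2*m) :: complex poly"
  shows "(\<Sum>k\<le>degree P. cmod (coeff P k)) \<le> 2 * real ((2*m) choose m)"
proof -
  have P: "P = [:1, -1:] ^ (2*m) + pCons 0 ([:1, -1:] ^ (2*m))"
    unfolding P_def by (simp add: mult_pCons_left)
  have "degree ([:1, -1:] ^ (2*m) :: complex poly) \<le> 2*m"
    using degree_power_le[of "[:1, -1::complex:]" "2*m"] by simp
  then have "degree P \<le> Suc (2*m)"
    unfolding P_def using degree_mult_le[of "[:1, 1::complex:]" "[:1, -1:] ^ (2*m)"] by simp
  then have "(\<Sum>k\<le>degree P. cmod (coeff P k)) \<le> (\<Sum>k\<le>Suc (2*m). cmod (coeff P k))"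
    by (intro sum_mono2) auto
  also have "\<dots> = 1 + (\<Sum>j\<le>2*m. \<bar>real ((2*m) choose j) - real ((2*m) choose Suc j)\<bar>)"
  proof -
    have "cmod (coeff P (Suc j)) = \<bar>real ((2*m) choose j) - real ((2*m) choose Suc j)\<bar>" for j
    proof -
      have "coeff P (Suc j) = (-1) ^ j * of_real (real ((2*m) choose j) - real ((2*m) choose Suc j))"
        unfolding P by (simp add: coeff_one_minus_X_power algebra_simps)
      then show ?thesis by (simp only: norm_mult norm_power norm_of_real) simp
    qed
    then show ?thesis by (subst sum.atMost_Suc_shift) (simp add: P coeff_one_minus_X_power)
  qed
  also have "\<dots> = 2 * real ((2*m) choose m)" by (simp add: sum_abs_diff_binomial)
  finally show ?thesis .
qed

lemma Suc_times_central_binomial: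
  "Suc m * ((2 * Suc m) choose Suc m) = 2 * (2*m + 1) * ((2*m) choose m)"
proof -
  define C where "C = (2*m) choose m"
  define D where "D = (Suc (2*m)) choose m"
  define E where "E = (2 * Suc m) choose Suc m"
  have a: "Suc (Suc (2*m)) * D = E * Suc m"
    unfolding D_def E_def using Suc_times_binomial_eq[of "Suc (2*m)" m] by simp
  have b: "Suc (2*m) * C = D * Suc m"
    unfolding C_def D_def using Suc_times_binomial_eq[of "2*m" m] binomial_symmetric[of "Suc m" "Suc (2*m)"]
    by simp
  have "Suc m * (Suc m * E) = Suc (Suc (2*m)) * (D * Suc m)" using a by (simp add: algebra_simps)
  also have "\<dots> = Suc m * (2 * (2*m + 1) * C)" unfolding b[symmetric] by (simp add: algebra_simps)
  finally have "Suc m * E = 2 * (2*m + 1) * C"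
    by (simp only: mult_left_cancel nat.distinct(1) Zero_not_Suc)
  then show ?thesis unfolding C_def E_def .
qed

lemma central_binomial_over_4_power_squared_le:
  "(real ((2*m) choose m) / 4 ^ m)\<^sup>2 \<le> 1 / (2 * real m + 1)"
proof (induction m)
  case (Suc m)
  define C where "C = real ((2*m) choose m)"
  define c where "c = C / 4 ^ m"
  define t where "t = real m"
  define d where "d = real ((2 * Suc m) choose Suc m)"
  have t0: "t \<ge> 0" by (simp add: t_def)
  have "(t + 1) * d = 2 * (2 * t + 1) * C"
    using arg_cong[OF Suc_times_central_binomial[of m], of real]
    by (simp add: t_def d_def C_def algebra_simps del: binomial_Suc_Suc)
  then have "d = 2 * (2 * t + 1) * C / (t + 1)"
    using t0 by (simp add: eq_divide_eq algebra_simps)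
  then have "d / 4 ^ Suc m = c * (2 * (2 * t + 1) / (4 * (t + 1)))"
    by (simp add: c_def mult_ac)
  also have "2 * (2 * t + 1) / (4 * (t + 1)) = (2 * t + 1) / (2 * t + 2)"
    using t0 by (simp add: field_simps)
  finally have step: "d / 4 ^ Suc m = c * ((2 * t + 1) / (2 * t + 2))" .
  have "(d / 4 ^ Suc m)\<^sup>2 = c\<^sup>2 * ((2 * t + 1) / (2 * t + 2))\<^sup>2"
    unfolding step by (rule power_mult_distrib)
  also have "\<dots> \<le> 1 / (2 * t + 1) * ((2 * t + 1) / (2 * t + 2))\<^sup>2"
    using Suc by (intro mult_right_mono) (simp_all add: c_def C_def t_def)
  also have "\<dots> = (2 * t + 1) / (2 * t + 2)\<^sup>2"
    using t0 by (simp add: power2_eq_square)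
  also have "\<dots> \<le> 1 / (2 * t + 3)"
    using t0 by (simp add: power2_eq_square divide_simps) (simp add: algebra_simps)
  also have "2 * t + 3 = 2 * real (Suc m) + 1" by (simp add: t_def)
  finally show ?case unfolding d_def .
qed simp

lemma central_binomial_over_4_power_tendsto_0:
  "(\<lambda>m. sqrt (real ((2*m) choose m) / 4 ^ m)) \<longlonglongrightarrow> 0"
proof (rule Lim_null_comparison)
  show "\<forall>\<^sub>F m in sequentially. norm (sqrt (real ((2*m) choose m) / 4 ^ m)) \<le> sqrt (sqrt (inverse (real (Suc m))))"
  proof (intro always_eventually allI)
    fix m
    have "(real ((2*m) choose m) / 4 ^ m)\<^sup>2 \<le> inverse (real (Suc m))"
      using central_binomial_over_4_power_squared_le[of m] by (rule order.trans) (simp add: field_simps)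
    then have "real ((2*m) choose m) / 4 ^ m \<le> sqrt (inverse (real (Suc m)))"
      by (simp add: real_le_rsqrt)
    then show "norm (sqrt (real ((2*m) choose m) / 4 ^ m)) \<le> sqrt (sqrt (inverse (real (Suc m))))"
      by simp
  qed
  show "(\<lambda>m. sqrt (sqrt (inverse (real (Suc m))))) \<longlonglongrightarrow> 0"
    using tendsto_real_sqrt[OF tendsto_real_sqrt[OF LIMSEQ_inverse_real_of_nat]] by simp
qed

section \<open>Right multiplication by a unitary a + i b\<close>

text \<open>p stands for 1 - b, where b is the element of the unitization with a^2 + b^2 = 1.
  Then bmult, bmult_left and umult are right multiplication by b, left multiplication by b and
  right multiplication by U = a + i b, and mult_poly_usq P is right multiplication by P(U^2).\<close>
locale cos_sin_pair =
  fixes a p :: "'a::cstar_algebra"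
  assumes adj_a: "adj a = a" and adj_p: "adj p = p" and a_p_commute: "a * p = p * a"
    and p_square: "p * p = scaleR 2 p - a * a"
begin

definition bmult :: "'a \<Rightarrow> 'a" where "bmult y = y - y * p"

definition bmult_left :: "'a \<Rightarrow> 'a" where "bmult_left y = y - p * y"

definition umult :: "'a \<Rightarrow> 'a" where "umult y = y * a + scaleC \<i> (bmult y)"

lemma p_a_commute: "p * a = a * p" "p * (a * y) = a * (p * y)"
  using a_p_commute by (simp_all add: mult.assoc[symmetric])

lemma umult_mult_adj: "umult y * adj (umult y) = y * adj y"
proof -
  define y' where "y' = adj y"
  define u where "u = y - y * p"
  define u' where "u' = y' - p * y'"
  have adj_umult: "adj (umult y) = a * y' + scaleC (- \<i>) u'"
    unfolding umult_def bmult_def y'_def u'_def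
    by (simp add: adj_add adj_mult adj_scaleC adj_diff adj_a adj_p)
  have "umult y * adj (umult y)
      = y * a * (a * y') + scaleC (- \<i>) (y * a * u') + scaleC \<i> (u * (a * y')) + u * u'"
    unfolding adj_umult unfolding umult_def bmult_def u_def[symmetric]
    by (simp add: distrib_left distrib_right scaleC_mult_left scaleC_mult_right scaleC_scaleC
        scaleC_one add.assoc scaleC_add_right)
  also have "y * a * u' = u * (a * y')"
    unfolding u_def u'_def by (simp add: algebra_simps p_a_commute)
  also have "u * u' = y * y' - y * (a * a) * y'"
  proof -
    have "u * u' = y * y' - y * p * y' - y * p * y' + y * (p * p) * y'"
      unfolding u_def u'_def by (simp add: algebra_simps)
    then show ?thesis unfolding p_square by (simp add: algebra_simps scaleR_2)
  qed
  finally show ?thesis unfolding y'_def by (simp add: scaleC_minus_left algebra_simps)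
qed

lemma norm_umult [simp]: "norm (umult y) = norm y"
proof -
  have "norm (umult y) * norm (umult y) = norm y * norm y"
    using norm_mult_adj[of "umult y"] norm_mult_adj[of y] umult_mult_adj by simp
  then show ?thesis
    by (simp add: power2_eq_square[symmetric] power2_eq_iff_nonneg)
qed

lemma norm_umult_power [simp]: "norm ((umult ^^ k) y) = norm y"
  by (induction k) simp_all

lemma umult_zero: "umult 0 = 0"
  by (simp add: umult_def bmult_def)

lemma umult_add: "umult (y + z) = umult y + umult z"
  unfolding umult_def bmult_def by (simp add: algebra_simps scaleC_distrib_simps)

lemma umult_scaleC: "umult (scaleC c y) = scaleC c (umult y)"
  unfolding umult_def bmult_def by (simp add: scaleC_distrib_simps mult.commute)

lemma umult_minus: "umult (- y) = - umult y"
  using umult_scaleC[of "-1" y] by (simp add: scaleC_minus_left scaleC_one)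

lemma umult_sum: "umult (sum f A) = (\<Sum>i\<in>A. umult (f i))"
  by (induction A rule: infinite_finite_induct) (simp_all add: umult_add umult_zero)

lemma umult_mult_a: "umult (y * a) = umult y * a"
  unfolding umult_def bmult_def by (simp add: scaleC_distrib_simps algebra_simps p_a_commute)

lemma umult_bmult: "umult (bmult y) = bmult (umult y)"
  unfolding umult_def bmult_def by (simp add: scaleC_distrib_simps algebra_simps p_a_commute)

lemma bmult_mult_a: "bmult y * a = bmult (y * a)"
  unfolding bmult_def by (simp add: algebra_simps p_a_commute)

text \<open>The relations a = (U + U*)/2 and b = (U - U*)/(2i), multiplied by U.\<close>
lemma umult_mult_a_eq: "umult y * a = scaleC (1/2) (umult (umult y) + y)"
proof (rule scaleC_half)
  show "umult y * a + umult y * a = umult (umult y) + y"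
    unfolding umult_def bmult_def
    by (simp add: scaleC_distrib_simps algebra_simps p_a_commute p_square scaleR_2)
qed

lemma bmult_umult_eq: "bmult (umult y) = scaleC (\<i>/2) (y - umult (umult y))"
proof -
  have "bmult (umult y) + bmult (umult y) = scaleC \<i> (y - umult (umult y))"
    unfolding umult_def bmult_def
    by (simp add: scaleC_distrib_simps algebra_simps p_a_commute p_square scaleR_2)
  from scaleC_half[OF this] show ?thesis by (simp add: scaleC_scaleC)
qed

definition mult_poly_usq :: "complex poly \<Rightarrow> 'a \<Rightarrow> 'a" where
  "mult_poly_usq P y = (\<Sum>k\<le>degree P. scaleC (coeff P k) ((umult ^^ (2*k)) y))"

lemma mult_poly_usq_eq:
  assumes "degree P \<le> n"
  shows "mult_poly_usq P y = (\<Sum>k\<le>n. scaleC (coeff P k) ((umult ^^ (2*k)) y))"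
  unfolding mult_poly_usq_def
  by (rule sum.mono_neutral_left) (use assms in \<open>auto simp: coeff_eq_0\<close>)

lemma mult_poly_usq_1: "mult_poly_usq 1 y = y"
  by (simp add: mult_poly_usq_def scaleC_one)

lemma mult_poly_usq_add: "mult_poly_usq (P + Q) y = mult_poly_usq P y + mult_poly_usq Q y"
proof -
  define n where "n = max (degree P) (degree Q)"
  have "degree (P + Q) \<le> n" "degree P \<le> n" "degree Q \<le> n"
    unfolding n_def using degree_add_le_max[of P Q] by auto
  then show ?thesis
    by (simp add: mult_poly_usq_eq[of _ n] scaleC_add_left sum.distrib)
qed

lemma mult_poly_usq_smult: "mult_poly_usq (smult c P) y = scaleC c (mult_poly_usq P y)"
  by (simp add: mult_poly_usq_eq[of _ "degree P"] mult_poly_usq_def scaleC_sum_right scaleC_scaleC)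

lemma mult_poly_usq_pCons_0: "mult_poly_usq (pCons 0 P) y = umult (umult (mult_poly_usq P y))"
proof -
  have "mult_poly_usq (pCons 0 P) y
      = (\<Sum>k\<le>Suc (degree P). scaleC (coeff (pCons 0 P) k) ((umult ^^ (2*k)) y))"
    by (rule mult_poly_usq_eq) simp
  also have "\<dots> = (\<Sum>k\<le>degree P. scaleC (coeff P k) ((umult ^^ (2 * Suc k)) y))"
    by (subst sum.atMost_Suc_shift) simp
  also have "\<dots> = umult (umult (mult_poly_usq P y))"
    unfolding mult_poly_usq_def umult_sum by (simp add: umult_scaleC)
  finally show ?thesis .
qed

lemma mult_poly_usq_one_minus_X:
  "mult_poly_usq ([:1, -1:] * P) y = mult_poly_usq P y - umult (umult (mult_poly_usq P y))"
proof -
  have "[:1, -1:] * P = P + pCons 0 (smult (-1) P)" by (simp add: mult_pCons_left)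
  moreover have "mult_poly_usq (pCons 0 (smult (-1) P)) y = - umult (umult (mult_poly_usq P y))"
    by (simp only: mult_poly_usq_pCons_0 mult_poly_usq_smult umult_scaleC scaleC_minus_left
        scaleC_one umult_minus)
  ultimately show ?thesis by (simp add: mult_poly_usq_add)
qed

lemma mult_poly_usq_one_plus_X:
  "mult_poly_usq ([:1, 1:] * P) y = mult_poly_usq P y + umult (umult (mult_poly_usq P y))"
proof -
  have "[:1, 1:] * P = P + pCons 0 P" by (simp add: mult_pCons_left)
  then show ?thesis by (simp add: mult_poly_usq_add mult_poly_usq_pCons_0)
qed

lemma norm_mult_poly_usq_le:
  "norm (mult_poly_usq P y) \<le> (\<Sum>k\<le>degree P. cmod (coeff P k)) * norm y"
  unfolding mult_poly_usq_def sum_distrib_right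
  by (rule order.trans[OF norm_sum]) (simp add: norm_scaleC)

lemma umult_power_bmult_power:
  "(umult ^^ m) ((bmult ^^ m) y) = scaleC ((\<i>/2) ^ m) (mult_poly_usq ([:1, -1:] ^ m) y)"
proof (induction m)
  case 0
  show ?case by (simp add: mult_poly_usq_1 scaleC_one)
next
  case (Suc m)
  have "(umult ^^ m) (bmult z) = bmult ((umult ^^ m) z)" for z
    by (induction m) (simp_all add: umult_bmult)
  then have "(umult ^^ Suc m) ((bmult ^^ Suc m) y) = bmult (umult ((umult ^^ m) ((bmult ^^ m) y)))"
    by (simp add: umult_bmult)
  also have "\<dots> = scaleC (\<i>/2) ((umult ^^ m) ((bmult ^^ m) y) - umult (umult ((umult ^^ m) ((bmult ^^ m) y))))"
    by (rule bmult_umult_eq)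
  also have "\<dots> = scaleC ((\<i>/2) ^ Suc m) (mult_poly_usq ([:1, -1:] * [:1, -1:] ^ m) y)"
    unfolding Suc mult_poly_usq_one_minus_X umult_scaleC
    by (simp add: scaleC_diff_right scaleC_scaleC)
  finally show ?case by simp
qed

lemma umult_power_bmult_power_mult_a:
  "(umult ^^ Suc m) ((bmult ^^ m) y * a)
    = scaleC ((1/2) * (\<i>/2) ^ m) (mult_poly_usq ([:1, 1:] * [:1, -1:] ^ m) y)"
proof -
  have "(umult ^^ m) (z * a) = (umult ^^ m) z * a" for z
    by (induction m) (simp_all add: umult_mult_a)
  then have "(umult ^^ Suc m) ((bmult ^^ m) y * a) = umult ((umult ^^ m) ((bmult ^^ m) y)) * a"
    by (simp add: umult_mult_a)
  also have "\<dots> = scaleC (1/2) (umult (umult ((umult ^^ m) ((bmult ^^ m) y))) + (umult ^^ m) ((bmult ^^ m) y))"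
    by (rule umult_mult_a_eq)
  also have "\<dots> = scaleC ((1/2) * (\<i>/2) ^ m) (mult_poly_usq ([:1, 1:] * [:1, -1:] ^ m) y)"
    unfolding umult_power_bmult_power mult_poly_usq_one_plus_X umult_scaleC
    by (simp add: scaleC_add_right scaleC_scaleC add.commute)
  finally show ?thesis .
qed

lemma norm_bmult_power_mult_a_le:
  "norm ((bmult ^^ (2*m)) y * a) \<le> real ((2*m) choose m) / 4 ^ m * norm y"
proof -
  define P :: "complex poly" where "P = [:1, 1:] * [:1, -1:] ^ (2*m)"
  have "norm ((bmult ^^ (2*m)) y * a) = norm ((umult ^^ Suc (2*m)) ((bmult ^^ (2*m)) y * a))"
    by simp
  also have "\<dots> = (1/2) ^ Suc (2*m) * norm (mult_poly_usq P y)"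
    unfolding umult_power_bmult_power_mult_a P_def
    by (simp add: norm_scaleC norm_mult norm_power norm_divide)
  also have "\<dots> \<le> (1/2) ^ Suc (2*m) * ((\<Sum>k\<le>degree P. cmod (coeff P k)) * norm y)"
    by (intro mult_left_mono norm_mult_poly_usq_le) simp
  also have "\<dots> \<le> (1/2) ^ Suc (2*m) * (2 * real ((2*m) choose m) * norm y)"
    unfolding P_def by (intro mult_left_mono mult_right_mono sum_norm_coeff_one_plus_X_one_minus_X_power) simp_all
  also have "\<dots> = real ((2*m) choose m) / 4 ^ m * norm y"
  proof -
    have "(1/2 :: real) ^ Suc (2*m) = 1 / (2 * 4 ^ m)"
      by (induction m) (simp_all add: field_simps)
    then show ?thesis by simp
  qed
  finally show ?thesis .
qed

lemma bmult_power_commute_adj: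
  "p * (bmult ^^ k) a = (bmult ^^ k) a * p \<and> adj ((bmult ^^ k) a) = (bmult ^^ k) a"
proof (induction k)
  case (Suc k)
  define v where "v = (bmult ^^ k) a"
  have "p * v = v * p" "adj v = v" using Suc by (simp_all add: v_def)
  moreover from this have "p * (v * p) = v * (p * p)" by (metis mult.assoc)
  ultimately have "p * bmult v = bmult v * p" "adj (bmult v) = bmult v"
    unfolding bmult_def by (simp_all add: algebra_simps adj_diff adj_mult adj_p)
  then show ?case by (simp add: v_def)
qed (simp add: p_a_commute adj_a)

lemma bmult_power_mult_left: "(bmult ^^ k) (y * z) = y * (bmult ^^ k) z"
  by (induction k) (simp_all add: bmult_def algebra_simps)

lemma bmult_power_mult_a: "(bmult ^^ k) y * a = (bmult ^^ k) (y * a)"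
  by (induction k) (simp_all add: bmult_mult_a)

lemma norm_bmult_power_a_le: "norm ((bmult ^^ (2*m)) a) \<le> real ((2*m) choose m) / 4 ^ m"
proof -
  define u where "u = (bmult ^^ (2*m)) a"
  have "u * u = (bmult ^^ (2*m)) (u * a)"
    unfolding bmult_power_mult_left by (simp add: u_def)
  also have "\<dots> = (bmult ^^ (2*m)) u * a"
    by (rule bmult_power_mult_a[symmetric])
  finally have "u * u = (bmult ^^ (2*m)) u * a" .
  then have le: "norm u * norm u \<le> real ((2*m) choose m) / 4 ^ m * norm u"
    using norm_mult_adj[of u] bmult_power_commute_adj[of "2*m"] norm_bmult_power_mult_a_le[of m u]
    by (simp add: u_def)
  show ?thesis
  proof (cases "u = 0")
    case False
    then show ?thesis using mult_right_le_imp_le[OF le] by (simp add: u_def)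
  qed (simp add: u_def)
qed

lemma adj_bmult_power: "adj ((bmult ^^ m) y) = (bmult_left ^^ m) (adj y)"
  by (induction m) (simp_all add: bmult_def bmult_left_def adj_diff adj_mult adj_p)

lemma bmult_left_power_mult: "(bmult_left ^^ m) y * z = (bmult_left ^^ m) (y * z)"
  by (induction m) (simp_all add: bmult_left_def algebra_simps)

lemma bmult_left_power_bmult_power_a: "(bmult_left ^^ j) ((bmult ^^ k) a) = (bmult ^^ (j + k)) a"
proof (induction j)
  case (Suc j)
  have "(bmult_left ^^ Suc j) ((bmult ^^ k) a) = bmult_left ((bmult ^^ (j + k)) a)"
    using Suc by simp
  also have "\<dots> = bmult ((bmult ^^ (j + k)) a)"
    using bmult_power_commute_adj[of "j + k"] by (simp add: bmult_left_def bmult_def)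
  finally show ?case by simp
qed simp

lemma norm_bmult_power_adj_le:
  assumes "a = x * adj x"
  shows "norm ((bmult ^^ m) (adj x)) \<le> sqrt (real ((2*m) choose m) / 4 ^ m)"
proof -
  define z where "z = (bmult ^^ m) (adj x)"
  have "adj z * z = (bmult_left ^^ m) (x * (bmult ^^ m) (adj x))"
    unfolding z_def adj_bmult_power adj_adj bmult_left_power_mult ..
  also have "\<dots> = (bmult ^^ (2*m)) a"
    unfolding bmult_power_mult_left[symmetric] assms[symmetric] bmult_left_power_bmult_power_a
    by (simp add: mult_2)
  finally have "norm z * norm z = norm ((bmult ^^ (2*m)) a)" using cstar_identity[of z] by simp
  then show ?thesis
    using norm_bmult_power_a_le[of m] unfolding z_def by (simp add: real_le_rsqrt power2_eq_square)
qed

lemma diff_bmult_power_mem: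
  assumes I: "closed_ideal I" and "y * p \<in> I"
  shows "y - (bmult ^^ m) y \<in> I"
proof (induction m)
  case 0
  show ?case using subspace_0[OF closed_ideal_subspace[OF I]] by simp
next
  case (Suc m)
  define w where "w = (bmult ^^ m) y"
  have "(y - w) * p \<in> I" using Suc closed_ideal_mult_right[OF I] by (simp add: w_def)
  then have "y * p - (y - w) * p \<in> I" by (rule subspace_diff[OF closed_ideal_subspace[OF I] assms(2)])
  also have "y * p - (y - w) * p = w * p" by (simp add: algebra_simps)
  finally have "w * p \<in> I" .
  then have "(y - w) + w * p \<in> I"
    using subspace_add[OF closed_ideal_subspace[OF I]] Suc by (simp add: w_def)
  moreover have "y - (bmult ^^ Suc m) y = (y - w) + w * p"
    by (simp add: w_def bmult_def algebra_simps)
  ultimately show ?case by (simp only:)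
qed

lemma adj_mem_closed_ideal:
  assumes I: "closed_ideal I" and a: "a = x * adj x" and "adj x * p \<in> I"
  shows "adj x \<in> I"
proof -
  define z where "z m = (bmult ^^ m) (adj x)" for m
  have "z \<longlonglongrightarrow> 0"
  proof (rule Lim_null_comparison[OF _ central_binomial_over_4_power_tendsto_0])
    show "\<forall>\<^sub>F m in sequentially. norm (z m) \<le> sqrt (real ((2*m) choose m) / 4 ^ m)"
      using norm_bmult_power_adj_le[OF a] by (simp add: z_def)
  qed
  then have "(\<lambda>m. adj x - z m) \<longlonglongrightarrow> adj x - 0" by (intro tendsto_intros)
  moreover have "adj x - z m \<in> I" for m
    unfolding z_def using diff_bmult_power_mem[OF I assms(3)] .
  ultimately show ?thesis
    using I unfolding closed_ideal_def by (metis closed_sequentially diff_zero)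
qed

end

section \<open>Closed ideals are self-adjoint\<close>

lemma norm_half_add_square_le:
  fixes s q :: "'a::real_normed_algebra"
  assumes "norm s \<le> 1/16" "norm q \<le> 1/4"
  shows "norm (scaleR (1/2) (s + q * q)) \<le> 1/4"
proof -
  have "norm (scaleR (1/2) (s + q * q)) \<le> 1/2 * (norm s + norm q * norm q)"
    by (auto intro!: mult_left_mono order.trans[OF norm_triangle_ineq] add_left_mono norm_mult_ineq)
  also have "\<dots> \<le> 1/2 * (1/16 + 1/4 * (1/4))"
    using assms by (intro mult_left_mono add_mono mult_mono) auto
  finally show ?thesis by simp
qed

lemma dist_half_add_square_le:
  fixes s q q' :: "'a::real_normed_algebra"
  assumes "norm q \<le> 1/4" "norm q' \<le> 1/4"
  shows "dist (scaleR (1/2) (s + q * q)) (scaleR (1/2) (s + q' * q')) \<le> 1/2 * dist q q'"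
proof -
  have "scaleR (1/2) (s + q * q) - scaleR (1/2) (s + q' * q') = scaleR (1/2) (q * (q - q') + (q - q') * q')"
    unfolding scaleR_diff_right[symmetric] by (simp add: algebra_simps)
  then have "dist (scaleR (1/2) (s + q * q)) (scaleR (1/2) (s + q' * q'))
      = 1/2 * norm (q * (q - q') + (q - q') * q')"
    by (simp add: dist_norm)
  also have "\<dots> \<le> 1/2 * (norm q * norm (q - q') + norm (q - q') * norm q')"
    by (intro mult_left_mono order.trans[OF norm_triangle_ineq] add_mono norm_mult_ineq) simp_all
  also have "\<dots> \<le> 1/2 * (1/4 * norm (q - q') + norm (q - q') * (1/4))"
    using assms by (intro mult_left_mono add_mono mult_right_mono mult_left_mono) auto
  also have "\<dots> \<le> 1/2 * dist q q'" by (simp add: dist_norm)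
  finally show ?thesis .
qed

text \<open>The fixed point of q \<mapsto> (a^2 + q^2)/2 is p = 1 - sqrt (1 - a^2).\<close>
lemma cos_sin_pair_exists:
  fixes a v :: "'a::cstar_algebra"
  assumes I: "closed_ideal I" and adj_a: "adj a = a" and norm_a: "norm a \<le> 1/4"
    and mem: "v * (a * a) \<in> I"
  shows "\<exists>p. cos_sin_pair a p \<and> v * p \<in> I"
proof -
  define F where "F q = scaleR (1/2) (a * a + q * q)" for q
  define C where "C = {q. norm q \<le> 1/4} \<inter> {q. a * q = q * a} \<inter> {q. adj q = q} \<inter> {q. v * q \<in> I}"
  have "norm (a * a) \<le> 1/16"
    using norm_mult_ineq[of a a] mult_mono[OF norm_a norm_a] by simp
  then have norm_F: "norm (F q) \<le> 1/4" if "norm q \<le> 1/4" for q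
    unfolding F_def using that by (rule norm_half_add_square_le)
  have "closed {q. v * q \<in> I}"
    using I unfolding closed_ideal_def vimage_def[symmetric]
    by (intro continuous_closed_vimage continuous_intros) auto
  moreover have "closed {q. adj q = q}"
    using closed_Collect_eq[OF linear_continuous_on[OF bounded_linear_adj] continuous_on_id] .
  moreover have "closed {q :: 'a. norm q \<le> 1/4}"
    by (intro closed_Collect_le continuous_intros)
  moreover have "closed {q. a * q = q * a}"
    by (intro closed_Collect_eq continuous_intros)
  ultimately have "closed C"
    unfolding C_def by (intro closed_Int)
  moreover have "F ` C \<subseteq> C"
  proof
    fix z assume "z \<in> F ` C"
    then obtain q where q: "norm q \<le> 1/4" "a * q = q * a" "adj q = q" "v * q \<in> I" and z: "z = F q"
      unfolding C_def by blast
    have "a * (q * q) = (q * q) * a" by (metis q(2) mult.assoc)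
    then have "a * (a * a + q * q) = (a * a + q * q) * a"
      by (simp add: distrib_left distrib_right mult.assoc)
    then have "a * F q = F q * a"
      unfolding F_def by (simp add: mult_scaleR_left mult_scaleR_right)
    moreover have "adj (F q) = F q"
      unfolding F_def by (simp add: adj_scaleR adj_add adj_mult adj_a q(3))
    moreover have "v * F q \<in> I"
    proof -
      have "v * (a * a) + (v * q) * q \<in> I"
        using closed_ideal_mult_right[OF I q(4)] by (rule subspace_add[OF closed_ideal_subspace[OF I] mem])
      then have "scaleR (1/2) (v * (a * a) + (v * q) * q) \<in> I"
        by (rule subspace_scale[OF closed_ideal_subspace[OF I]])
      then show ?thesis
        unfolding F_def by (simp add: mult_scaleR_right distrib_left mult.assoc)
    qed
    ultimately show "z \<in> C"
      unfolding C_def z using norm_F[OF q(1)] by simp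
  qed
  moreover have "dist (F q) (F q') \<le> 1/2 * dist q q'" if "q \<in> C" "q' \<in> C" for q q'
    using that unfolding F_def C_def by (intro dist_half_add_square_le) auto
  moreover have "0 \<in> C"
    unfolding C_def using subspace_0[OF closed_ideal_subspace[OF I]] by simp
  ultimately have "\<exists>!p\<in>C. F p = p"
    by (intro Banach_fix[of C "1/2" F]) (auto simp: complete_eq_closed)
  then obtain p where p: "p \<in> C" "F p = p" by blast
  have "scaleR 2 p = scaleR 2 (F p)" using p(2) by simp
  also have "\<dots> = a * a + p * p" unfolding F_def by simp
  finally have "p * p = scaleR 2 p - a * a" by simp
  with p(1) adj_a show ?thesis
    unfolding C_def cos_sin_pair_def by auto
qed

lemma closed_ideal_adj:
  fixes x :: "'a::cstar_algebra"
  assumes I: "closed_ideal I" and x: "x \<in> I"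
  shows "adj x \<in> I"
proof -
  have small: "adj y \<in> I" if "y \<in> I" "norm y \<le> 1/2" for y :: 'a
  proof -
    define a where "a = y * adj y"
    have "norm a \<le> 1/2 * (1/2)"
      unfolding a_def norm_mult_adj using that(2) by (intro mult_mono) auto
    moreover have "adj a = a" by (simp add: a_def adj_mult adj_adj)
    moreover have "adj y * (a * a) \<in> I"
      unfolding a_def using that(1) by (simp add: mult.assoc[symmetric] closed_ideal_mult_right[OF I]
          closed_ideal_mult_left[OF I])
    ultimately obtain p where "cos_sin_pair a p" "adj y * p \<in> I"
      using cos_sin_pair_exists[OF I] by fastforce
    then show ?thesis using cos_sin_pair.adj_mem_closed_ideal[OF _ I a_def] by blast
  qed
  show ?thesis
  proof (cases "x = 0")
    case False
    define t where "t = 2 * norm x"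
    have t: "t > 0" using False by (simp add: t_def)
    have "adj (scaleR (1/t) x) \<in> I"
      using x t by (intro small subspace_scale[OF closed_ideal_subspace[OF I]]) (simp_all add: t_def)
    then have "scaleR t (adj (scaleR (1/t) x)) \<in> I"
      by (rule subspace_scale[OF closed_ideal_subspace[OF I]])
    then show ?thesis using t by (simp add: adj_scaleR)
  qed (simp add: subspace_0[OF closed_ideal_subspace[OF I]])
qed

lemma coset_full_alg: "coset full_alg N x = {x + n |n. n \<in> N}"
  by (simp add: coset_def full_alg_def)

lemma coset_pullback_full_alg: "coset (pullback_alg full_alg full_alg f g) N w = {w + n |n. n \<in> N}"
  by (simp add: coset_def pullback_alg_def full_alg_def case_prod_beta plus_prod_def)

lemma subspace_coset_eq_iff:
  fixes N :: "'a::real_vector set"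
  assumes N: "subspace N"
  shows "{x + n |n. n \<in> N} = {y + n |n. n \<in> N} \<longleftrightarrow> x - y \<in> N"
proof -
  have sub: "{x + n |n. n \<in> N} \<subseteq> {y + n |n. n \<in> N}" if "x - y \<in> N" for x y
  proof
    fix z assume "z \<in> {x + n |n. n \<in> N}"
    then obtain n where "n \<in> N" "z = y + ((x - y) + n)" by auto
    then show "z \<in> {y + n |n. n \<in> N}" using subspace_add[OF N that] by blast
  qed
  show ?thesis
  proof
    assume "{x + n |n. n \<in> N} = {y + n |n. n \<in> N}"
    moreover have "x + 0 \<in> {x + n |n. n \<in> N}" using subspace_0[OF N] by blast
    ultimately obtain n where "n \<in> N" "x = y + n" by auto
    then show "x - y \<in> N" by simp
  next
    assume "x - y \<in> N"
    moreover from this have "y - x \<in> N" using subspace_neg[OF N] by fastforce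
    ultimately show "{x + n |n. n \<in> N} = {y + n |n. n \<in> N}" using sub by blast
  qed
qed

lemma rep_subspace_coset_diff:
  fixes N :: "'a::real_vector set"
  assumes "subspace N"
  shows "rep {x + n |n. n \<in> N} - x \<in> N"
proof -
  have "x + 0 \<in> {x + n |n. n \<in> N}" using subspace_0[OF assms] by blast
  then have "rep {x + n |n. n \<in> N} \<in> {x + n |n. n \<in> N}" unfolding rep_def by (rule someI)
  then show ?thesis by auto
qed

lemma carr_quot_alg_full_alg: "carr (quot_alg full_alg I) = range (coset full_alg I)"
  by (auto simp: quot_alg_def full_alg_def)

lemma full_alg_ops [simp]:
  "add full_alg = (+)" "mul full_alg = (*)" "smul full_alg = scaleC" "invol full_alg = adj"
  by (simp_all add: full_alg_def)

lemma coset_full_alg_eq_iff: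
  "closed_ideal I \<Longrightarrow> coset full_alg I x = coset full_alg I y \<longleftrightarrow> x - y \<in> I"
  unfolding coset_full_alg by (rule subspace_coset_eq_iff[OF closed_ideal_subspace])

lemma rep_coset_full_alg_diff: "closed_ideal I \<Longrightarrow> rep (coset full_alg I x) - x \<in> I"
  unfolding coset_full_alg by (rule rep_subspace_coset_diff[OF closed_ideal_subspace])

lemma quot_alg_full_alg_ops:
  assumes I: "closed_ideal I"
  shows "add (quot_alg full_alg I) (coset full_alg I x) (coset full_alg I y) = coset full_alg I (x + y)"
  "mul (quot_alg full_alg I) (coset full_alg I x) (coset full_alg I y) = coset full_alg I (x * y)"
  "smul (quot_alg full_alg I) c (coset full_alg I x) = coset full_alg I (scaleC c x)"
  "invol (quot_alg full_alg I) (coset full_alg I x) = coset full_alg I (adj x)"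
proof -
  define x' where "x' = rep (coset full_alg I x)"
  define y' where "y' = rep (coset full_alg I y)"
  have x': "x' - x \<in> I" and y': "y' - y \<in> I"
    unfolding x'_def y'_def using I by (rule rep_coset_full_alg_diff)+
  have S: "subspace I" by (rule closed_ideal_subspace[OF I])
  have "(x' + y') - (x + y) \<in> I"
    using subspace_add[OF S x' y'] by (simp add: algebra_simps)
  moreover have "x' * y' - x * y \<in> I"
  proof -
    have "(x' - x) * y' + x * (y' - y) \<in> I"
      using closed_ideal_mult_right[OF I x'] closed_ideal_mult_left[OF I y'] by (rule subspace_add[OF S])
    then show ?thesis by (simp add: algebra_simps)
  qed
  moreover have "scaleC c x' - scaleC c x \<in> I"
    using closed_ideal_scaleC[OF I x'] by (simp add: scaleC_diff_right)
  moreover have "adj x' - adj x \<in> I"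
    using closed_ideal_adj[OF I x'] by (simp add: adj_diff)
  ultimately show
    "add (quot_alg full_alg I) (coset full_alg I x) (coset full_alg I y) = coset full_alg I (x + y)"
    "mul (quot_alg full_alg I) (coset full_alg I x) (coset full_alg I y) = coset full_alg I (x * y)"
    "smul (quot_alg full_alg I) c (coset full_alg I x) = coset full_alg I (scaleC c x)"
    "invol (quot_alg full_alg I) (coset full_alg I x) = coset full_alg I (adj x)"
    unfolding x'_def y'_def by (simp_all add: quot_alg_def coset_full_alg_eq_iff[OF I])
qed

lemma quot_map_coset:
  assumes I: "closed_ideal I" and K: "closed_ideal K" and f: "cstar_hom f" "f ` I \<subseteq> K"
  shows "quot_map full_alg I full_alg K f (coset full_alg I x) = coset full_alg K (f x)"
proof -
  have "f (rep (coset full_alg I x) - x) \<in> K"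
    using rep_coset_full_alg_diff[OF I] f(2) by blast
  then show ?thesis
    unfolding quot_map_def using coset_full_alg_eq_iff[OF K] linear_diff[OF cstar_hom_linear[OF f(1)]]
    by simp
qed

section \<open>The pullback of the quotients\<close>

lemma pullback_alg_ops:
  "carr (pullback_alg R S f g) = {(x, y). x \<in> carr R \<and> y \<in> carr S \<and> f x = g y}"
  "add (pullback_alg R S f g) w w' = (add R (fst w) (fst w'), add S (snd w) (snd w'))"
  "mul (pullback_alg R S f g) w w' = (mul R (fst w) (fst w'), mul S (snd w) (snd w'))"
  "smul (pullback_alg R S f g) c w = (smul R c (fst w), smul S c (snd w))"
  "invol (pullback_alg R S f g) w = (invol R (fst w), invol S (snd w))"
  by (simp_all add: pullback_alg_def case_prod_beta)

locale pullback_quotient =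
  fixes \<phi> :: "'a::cstar_algebra \<Rightarrow> 'c::cstar_algebra" and \<psi> :: "'b::cstar_algebra \<Rightarrow> 'c"
    and I :: "'a set" and J :: "'b set" and K :: "'c set"
  assumes hom_\<phi>: "cstar_hom \<phi>" and hom_\<psi>: "cstar_hom \<psi>"
    and I: "closed_ideal I" and J: "closed_ideal J" and K: "closed_ideal K"
    and \<phi>_I: "\<phi> ` I = K" and \<psi>_J: "\<psi> ` J \<subseteq> K"
begin

abbreviation "pb \<equiv> pullback_alg full_alg full_alg \<phi> \<psi>"

abbreviation "pb_ideal \<equiv> {(x, y). \<phi> x = \<psi> y \<and> x \<in> I \<and> y \<in> J}"

abbreviation "quotient_of_pullback \<equiv> quot_alg pb pb_ideal"

abbreviation "pullback_of_quotients \<equiv>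
  pullback_alg (quot_alg full_alg I) (quot_alg full_alg J)
    (quot_map full_alg I full_alg K \<phi>) (quot_map full_alg J full_alg K \<psi>)"

definition \<gamma> :: "('a \<times> 'b) set \<Rightarrow> 'a set \<times> 'b set" where
  "\<gamma> X = (coset full_alg I (fst (rep X)), coset full_alg J (snd (rep X)))"

lemma subspace_pb_ideal: "subspace pb_ideal"
  using closed_ideal_subspace[OF I] closed_ideal_subspace[OF J]
    cstar_hom_linear[OF hom_\<phi>] cstar_hom_linear[OF hom_\<psi>]
  unfolding subspace_def by (auto simp: zero_prod_def linear_0 linear_add linear_scale)

lemma \<gamma>_coset: "\<gamma> (coset pb pb_ideal w) = (coset full_alg I (fst w), coset full_alg J (snd w))"
proof -
  have "rep (coset pb pb_ideal w) - w \<in> pb_ideal"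
    unfolding coset_pullback_full_alg by (rule rep_subspace_coset_diff[OF subspace_pb_ideal])
  then have "fst (rep (coset pb pb_ideal w)) - fst w \<in> I" "snd (rep (coset pb pb_ideal w)) - snd w \<in> J"
    by (simp_all add: case_prod_beta)
  then show ?thesis
    unfolding \<gamma>_def using coset_full_alg_eq_iff[OF I] coset_full_alg_eq_iff[OF J] by simp
qed

lemma \<phi>_quot_map: "quot_map full_alg I full_alg K \<phi> (coset full_alg I x) = coset full_alg K (\<phi> x)"
  using quot_map_coset[OF I K hom_\<phi>] \<phi>_I by simp

lemma \<psi>_quot_map: "quot_map full_alg J full_alg K \<psi> (coset full_alg J y) = coset full_alg K (\<psi> y)"
  using quot_map_coset[OF J K hom_\<psi> \<psi>_J] .

lemma carr_quotient_of_pullback: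
  "carr quotient_of_pullback = {coset pb pb_ideal (x, y) |x y. \<phi> x = \<psi> y}"
  by (auto simp: quot_alg_def pullback_alg_ops full_alg_def)

lemma quot_alg_ops:
  "add (quot_alg R N) X Y = coset R N (add R (rep X) (rep Y))"
  "mul (quot_alg R N) X Y = coset R N (mul R (rep X) (rep Y))"
  "smul (quot_alg R N) c X = coset R N (smul R c (rep X))"
  "invol (quot_alg R N) X = coset R N (invol R (rep X))"
  by (simp_all add: quot_alg_def)

lemma star_hom_\<gamma>: "star_hom quotient_of_pullback pullback_of_quotients \<gamma>"
  unfolding star_hom_def
proof (intro conjI ballI allI)
  fix X assume "X \<in> carr quotient_of_pullback"
  then obtain x y where X: "X = coset pb pb_ideal (x, y)" and xy: "\<phi> x = \<psi> y"
    unfolding carr_quotient_of_pullback by blast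
  show "\<gamma> X \<in> carr pullback_of_quotients"
    unfolding X \<gamma>_coset pullback_alg_ops carr_quot_alg_full_alg
    by (simp add: \<phi>_quot_map \<psi>_quot_map xy)
next
  fix X Y c
  note ops = quot_alg_ops[of pb pb_ideal] pullback_alg_ops \<gamma>_coset
  show "\<gamma> (add quotient_of_pullback X Y) = add pullback_of_quotients (\<gamma> X) (\<gamma> Y)"
    "\<gamma> (mul quotient_of_pullback X Y) = mul pullback_of_quotients (\<gamma> X) (\<gamma> Y)"
    "\<gamma> (smul quotient_of_pullback c X) = smul pullback_of_quotients c (\<gamma> X)"
    "\<gamma> (invol quotient_of_pullback X) = invol pullback_of_quotients (\<gamma> X)"
    unfolding ops unfolding \<gamma>_def by (simp_all add: quot_alg_full_alg_ops I J)
qed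

lemma inj_on_\<gamma>: "inj_on \<gamma> (carr quotient_of_pullback)"
proof (rule inj_onI)
  fix X Y
  assume "X \<in> carr quotient_of_pullback" "Y \<in> carr quotient_of_pullback" and eq: "\<gamma> X = \<gamma> Y"
  then obtain x y x' y' where X: "X = coset pb pb_ideal (x, y)" "\<phi> x = \<psi> y"
    and Y: "Y = coset pb pb_ideal (x', y')" "\<phi> x' = \<psi> y'"
    unfolding carr_quotient_of_pullback by blast
  have "x - x' \<in> I" "y - y' \<in> J"
    using eq unfolding X(1) Y(1) \<gamma>_coset
    by (simp_all add: coset_full_alg_eq_iff[OF I] coset_full_alg_eq_iff[OF J])
  moreover have "\<phi> (x - x') = \<psi> (y - y')"
    using X(2) Y(2) by (simp add: linear_diff[OF cstar_hom_linear[OF hom_\<phi>]]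
        linear_diff[OF cstar_hom_linear[OF hom_\<psi>]])
  ultimately have "(x, y) - (x', y') \<in> pb_ideal" by simp
  then show "X = Y"
    unfolding X(1) Y(1) coset_pullback_full_alg subspace_coset_eq_iff[OF subspace_pb_ideal] .
qed

lemma \<gamma>_onto: "carr pullback_of_quotients \<subseteq> \<gamma> ` carr quotient_of_pullback"
proof
  fix Z assume "Z \<in> carr pullback_of_quotients"
  then obtain x y where Z: "Z = (coset full_alg I x, coset full_alg J y)"
    and "coset full_alg K (\<phi> x) = coset full_alg K (\<psi> y)"
    unfolding pullback_alg_ops carr_quot_alg_full_alg by (auto simp: \<phi>_quot_map \<psi>_quot_map)
  then have "\<phi> x - \<psi> y \<in> \<phi> ` I" using coset_full_alg_eq_iff[OF K] \<phi>_I by simp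
  then obtain i where i: "i \<in> I" "\<phi> i = \<phi> x - \<psi> y" by (metis imageE)
  then have "\<phi> (x - i) = \<psi> y" using linear_diff[OF cstar_hom_linear[OF hom_\<phi>]] by simp
  moreover have "coset full_alg I (x - i) = coset full_alg I x"
    using i(1) coset_full_alg_eq_iff[OF I] subspace_neg[OF closed_ideal_subspace[OF I]] by simp
  ultimately have "Z = \<gamma> (coset pb pb_ideal (x - i, y))" "coset pb pb_ideal (x - i, y) \<in> carr quotient_of_pullback"
    unfolding Z \<gamma>_coset carr_quotient_of_pullback by auto
  then show "Z \<in> \<gamma> ` carr quotient_of_pullback" by blast
qed

lemma star_iso_\<gamma>: "star_iso quotient_of_pullback pullback_of_quotients \<gamma>"
proof -
  have "\<gamma> ` carr quotient_of_pullback \<subseteq> carr pullback_of_quotients"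
    using star_hom_\<gamma> unfolding star_hom_def by blast
  then show ?thesis
    unfolding star_iso_def bij_betw_def using star_hom_\<gamma> inj_on_\<gamma> \<gamma>_onto by blast
qed

end

theorem proposition2p9:
  fixes \<phi> :: "'a::cstar_algebra \<Rightarrow> 'c::cstar_algebra"
    and \<psi> :: "'b::cstar_algebra \<Rightarrow> 'c"
    and I :: "'a set" and J :: "'b set" and K :: "'c set"
  assumes "cstar_hom \<phi>" and "cstar_hom \<psi>" and "surj \<phi>"
    and "closed_ideal I" and "closed_ideal J" and "closed_ideal K"
    and "\<phi> ` I = K" and "\<psi> ` J \<subseteq> K"
  shows "\<exists>\<gamma>.
     (\<forall>a b. \<phi> a = \<psi> b \<longrightarrow>
        \<gamma> (coset (pullback_alg full_alg full_alg \<phi> \<psi>)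
               {(x, y). \<phi> x = \<psi> y \<and> x \<in> I \<and> y \<in> J} (a, b))
        = (coset full_alg I a, coset full_alg J b)) \<and>
     star_iso
       (quot_alg (pullback_alg full_alg full_alg \<phi> \<psi>)
                 {(x, y). \<phi> x = \<psi> y \<and> x \<in> I \<and> y \<in> J})
       (pullback_alg (quot_alg full_alg I) (quot_alg full_alg J)
                     (quot_map full_alg I full_alg K \<phi>)
                     (quot_map full_alg J full_alg K \<psi>))
       \<gamma>"
proof -
  interpret pullback_quotient \<phi> \<psi> I J K
    using assms by unfold_locales
  show ?thesis
    using \<gamma>_coset star_iso_\<gamma> by (intro exI[of _ \<gamma>]) simp
qed

end
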